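(* Let $T$ be a tree on $S$ and let $\{u,v\}$ be an edge of $T$ with at most one of $u,v$ labelled. If $\mathrm{md}(u,v)>0$, then the tree $T/\{u,v\}$ obtained by contracting this edge satisfies $\mathrm{MP}(T/\{u,v\})>\mathrm{MP}(T)$. Equivalently, if contracting $\{u,v\}$ does not increase the MP-cost, then $\mathrm{md}(u,v)=0$.
   Context: Fix integers $n\ge 2$ and $m\ge 1$, and finite nonempty sets $\Sigma_1,\dots,\Sigma_m$ (the states of characters $1,\dots,m$). A set of species $S=\{S_1,\dots,S_n\}$ is given, each species $S_j$ being an $m$-tuple $(s_{j,1},\dots,s_{j,m})\in\Sigma_1\times\cdots\times\Sigma_m$. A tree on $S$ is a finite unrooted tree (connected acyclic undirected graph) $T$ together with an injective map assigning each species $S_j$ to a node of $T$. Nodes receiving a species are called labelled, the others unlabelled. A fit of $T$ is a map $f$ assigning to every node $v$ a tuple $f(v)=(f(v)_1,\dots,f(v)_m)\in\Sigma_1\times\cdots\times\Sigma_m$ such that $f(v)=S_j$ whenever $v$ is labelled with $S_j$. The cost of $f$ is $\sum_{\{u,v\}\in E(T)} h(f(u),f(v))$, where $h$ is the Hamming distance. The MP-cost $\mathrm{MP}(T)$ is the minimum cost over all fits of $T$. A best fit is a fit of cost $\mathrm{MP}(T)$. Root sets: for a node $v$ and character $i$, $VV(v)_i=\{f(v)_i : f \text{ a best fit of } T\}\subseteq\Sigma_i$ (for a labelled node this is the singleton containing its species' $i$-th state). For adjacent nodes $u,v$, the min-cost is $\mathrm{md}(u,v)=|\{i\in\{1,\dots,m\}: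 VV(u)_i\cap VV(v)_i=\emptyset\}|$. Edge contraction: for an edge $\{u,v\}$ of $T$ with at most one of $u,v$ labelled, $T/\{u,v\}$ is obtained by replacing $u$ and $v$ by a single new node $w$ adjacent to every node that was adjacent to $u$ or to $v$ (other than $u,v$ themselves); $w$ carries the species of $u$ or $v$ if one of them is labelled, and is unlabelled otherwise. All other nodes, edges and labels are unchanged. *)

theory Defs
  imports Main
begin

(* Conventions: characters are indexed 0..m-1, species 0..n-1.
   A state tuple is a function nat => 'a, of which only arguments < m matter.
   A tree has node set V :: 'v set and edge set E :: 'v set set (2-element subsets);
   the injective labelling is loc :: nat => 'v (species j sits at node loc j). *)

definition is_tree :: "'v set \<Rightarrow> 'v set set \<Rightarrow> bool" where
  "is_tree V E \<longleftrightarrow>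
     finite V \<and> V \<noteq> {} \<and>
     (\<forall>e\<in>E. e \<subseteq> V \<and> card e = 2) \<and>
     (\<forall>x\<in>V. \<forall>y\<in>V. (x, y) \<in> {(a, b). {a, b} \<in> E}\<^sup>*) \<and>
     \<not> (\<exists>c. length c \<ge> 3 \<and> distinct c \<and>
            (\<forall>k < length c. {c ! k, c ! ((k + 1) mod length c)} \<in> E))"

definition is_tree_on :: "nat \<Rightarrow> 'v set \<Rightarrow> 'v set set \<Rightarrow> (nat \<Rightarrow> 'v) \<Rightarrow> bool" where
  "is_tree_on n V E loc \<longleftrightarrow> is_tree V E \<and> inj_on loc {..<n} \<and> loc ` {..<n} \<subseteq> V"

definition is_fit :: "nat \<Rightarrow> (nat \<Rightarrow> 'a set) \<Rightarrow> 'v set \<Rightarrow> nat \<Rightarrow> (nat \<Rightarrow> nat \<Rightarrow> 'a)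
                      \<Rightarrow> (nat \<Rightarrow> 'v) \<Rightarrow> ('v \<Rightarrow> nat \<Rightarrow> 'a) \<Rightarrow> bool" where
  "is_fit m Sig V n S loc f \<longleftrightarrow>
     (\<forall>v\<in>V. \<forall>i<m. f v i \<in> Sig i) \<and> (\<forall>j<n. \<forall>i<m. f (loc j) i = S j i)"

definition edge_cost :: "nat \<Rightarrow> 'v set \<Rightarrow> ('v \<Rightarrow> nat \<Rightarrow> 'a) \<Rightarrow> nat" where
  "edge_cost m e f = card {i. i < m \<and> (\<exists>x\<in>e. \<exists>y\<in>e. f x i \<noteq> f y i)}"

definition fit_cost :: "nat \<Rightarrow> 'v set set \<Rightarrow> ('v \<Rightarrow> nat \<Rightarrow> 'a) \<Rightarrow> nat" where
  "fit_cost m E f = (\<Sum>e\<in>E. edge_cost m e f)"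

definition MP :: "nat \<Rightarrow> (nat \<Rightarrow> 'a set) \<Rightarrow> 'v set \<Rightarrow> 'v set set \<Rightarrow> nat
                  \<Rightarrow> (nat \<Rightarrow> nat \<Rightarrow> 'a) \<Rightarrow> (nat \<Rightarrow> 'v) \<Rightarrow> nat" where
  "MP m Sig V E n S loc = Inf (fit_cost m E ` {f. is_fit m Sig V n S loc f})"

definition best_fit :: "nat \<Rightarrow> (nat \<Rightarrow> 'a set) \<Rightarrow> 'v set \<Rightarrow> 'v set set \<Rightarrow> nat
                  \<Rightarrow> (nat \<Rightarrow> nat \<Rightarrow> 'a) \<Rightarrow> (nat \<Rightarrow> 'v) \<Rightarrow> ('v \<Rightarrow> nat \<Rightarrow> 'a) \<Rightarrow> bool" where
  "best_fit m Sig V E n S loc f \<longleftrightarrow>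
     is_fit m Sig V n S loc f \<and> fit_cost m E f = MP m Sig V E n S loc"

definition VV :: "nat \<Rightarrow> (nat \<Rightarrow> 'a set) \<Rightarrow> 'v set \<Rightarrow> 'v set set \<Rightarrow> nat
                  \<Rightarrow> (nat \<Rightarrow> nat \<Rightarrow> 'a) \<Rightarrow> (nat \<Rightarrow> 'v) \<Rightarrow> 'v \<Rightarrow> nat \<Rightarrow> 'a set" where
  "VV m Sig V E n S loc v i = {f v i | f. best_fit m Sig V E n S loc f}"

definition md :: "nat \<Rightarrow> (nat \<Rightarrow> 'a set) \<Rightarrow> 'v set \<Rightarrow> 'v set set \<Rightarrow> nat
                  \<Rightarrow> (nat \<Rightarrow> nat \<Rightarrow> 'a) \<Rightarrow> (nat \<Rightarrow> 'v) \<Rightarrow> 'v \<Rightarrow> 'v \<Rightarrow> nat" where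
  "md m Sig V E n S loc u v =
     card {i. i < m \<and> VV m Sig V E n S loc u i \<inter> VV m Sig V E n S loc v i = {}}"

(* Contraction of edge {u,v} into the node w (w is either u, v, or a node not in V):
   every node other than u, v is kept; u and v are mapped to w. *)
definition cmap :: "'v \<Rightarrow> 'v \<Rightarrow> 'v \<Rightarrow> 'v \<Rightarrow> 'v" where
  "cmap u v w x = (if x = u \<or> x = v then w else x)"

definition contr_V :: "'v set \<Rightarrow> 'v \<Rightarrow> 'v \<Rightarrow> 'v \<Rightarrow> 'v set" where
  "contr_V V u v w = cmap u v w ` V"

definition contr_E :: "'v set set \<Rightarrow> 'v \<Rightarrow> 'v \<Rightarrow> 'v \<Rightarrow> 'v set set" where
  "contr_E E u v w = (\<lambda>e. cmap u v w ` e) ` (E - {{u, v}})"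

definition contr_loc :: "(nat \<Rightarrow> 'v) \<Rightarrow> 'v \<Rightarrow> 'v \<Rightarrow> 'v \<Rightarrow> nat \<Rightarrow> 'v" where
  "contr_loc loc u v w = cmap u v w \<circ> loc"

end

theory Submission
  imports Defs
begin

text \<open>Pull an optimal fit g of the contracted tree back along the contraction map, i.e. give u and v
  the common state g w. The contracted edge then costs nothing and the remaining edges correspond
  bijectively, so this is a fit of T of cost MP(T/{u,v}). Hence
  MP(T/{u,v}) \<le> MP(T) forces it to be a best fit of T in which u and v agree, so md(u,v) = 0.\<close>

lemma edge_cost_image: "edge_cost m e (g \<circ> c) = edge_cost m (c ` e) g"
  unfolding edge_cost_def by (rule arg_cong[where f = card]) auto

lemma is_tree_no_triangle:
  assumes "is_tree V E" "{p, q} \<in> E" "{p, r} \<in> E" "{q, r} \<in> E" "p \<noteq> q" "p \<noteq> r" "q \<noteq> r"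
  shows False
proof -
  let ?c = "[p, q, r]"
  have "{?c ! k, ?c ! ((k + 1) mod length ?c)} \<in> E" if "k < length ?c" for k
  proof -
    have "k = 0 \<or> k = 1 \<or> k = 2" using that by auto
    then show ?thesis using assms(2,4) assms(3)[unfolded insert_commute[of p]] by auto
  qed
  moreover have "length ?c \<ge> 3" "distinct ?c" using assms(5-7) by auto
  ultimately show False using assms(1) unfolding is_tree_def by blast
qed

lemma is_tree_edgeE:
  assumes "is_tree V E" "e \<in> E"
  obtains p q where "e = {p, q}" "p \<noteq> q" "p \<in> V" "q \<in> V"
  using assms unfolding is_tree_def by (metis card_2_iff insert_subset)

lemma is_tree_finite_edges: "is_tree V E \<Longrightarrow> finite E"
  unfolding is_tree_def by (meson Pow_iff finite_Pow_iff finite_subset subsetI)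

lemma inj_on_contr_loc:
  assumes "inj_on loc A" "loc ` A \<subseteq> V" "\<not> (u \<in> loc ` A \<and> v \<in> loc ` A)" "w \<notin> V - {u, v}"
  shows "inj_on (contr_loc loc u v w) A"
proof (rule inj_onI)
  fix j k assume jk: "j \<in> A" "k \<in> A" and eq: "contr_loc loc u v w j = contr_loc loc u v w k"
  then have "loc j = loc k" using assms(2-4) unfolding contr_loc_def cmap_def
    by (auto split: if_splits)
  then show "j = k" using assms(1) jk by (auto dest: inj_onD)
qed

lemma is_fit_exists:
  assumes "\<forall>i<m. Sig i \<noteq> {}" "\<forall>j<n. \<forall>i<m. S j i \<in> Sig i" "inj_on loc {..<n}"
  shows "\<exists>f. is_fit m Sig V n S loc f"
proof -
  define f where "f x i = (if x \<in> loc ` {..<n} then S (the_inv_into {..<n} loc x) i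
                           else (SOME s. s \<in> Sig i))" for x i
  have "f (loc j) i = S j i" if "j < n" for j i
    using that assms(3) by (simp add: f_def the_inv_into_f_f)
  moreover have "f x i \<in> Sig i" if "i < m" for x i
    using that assms by (auto simp: f_def some_in_eq the_inv_into_f_f)
  ultimately show ?thesis unfolding is_fit_def by blast
qed

lemma MP_le_fit_cost: "is_fit m Sig V n S loc f \<Longrightarrow> MP m Sig V E n S loc \<le> fit_cost m E f"
  unfolding MP_def by (auto intro: cInf_lower)

lemma best_fit_exists:
  assumes "is_fit m Sig V n S loc f"
  obtains g where "best_fit m Sig V E n S loc g"
proof -
  have "fit_cost m E ` {f. is_fit m Sig V n S loc f} \<noteq> {}" using assms by auto
  from Inf_nat_def1[OF this] show ?thesis
    using that unfolding best_fit_def MP_def by auto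
qed

lemma is_fit_pullback:
  "is_fit m Sig (contr_V V u v w) n S (contr_loc loc u v w) g
    \<Longrightarrow> is_fit m Sig V n S loc (g \<circ> cmap u v w)"
  unfolding is_fit_def contr_V_def contr_loc_def by auto

lemma contr_image_incident_edge:
  assumes "is_tree V E" "e \<in> E - {{u, v}}" "u \<in> e \<or> v \<in> e"
  obtains x b where "e = {x, b}" "x \<in> {u, v}" "b \<in> V - {u, v}" "cmap u v w ` e = {w, b}"
proof -
  obtain p q where pq: "e = {p, q}" "p \<noteq> q" "p \<in> V" "q \<in> V"
    using is_tree_edgeE assms(1,2) by blast
  have "e \<noteq> {u, v}" using assms(2) by blast
  then consider "p \<in> {u, v}" "q \<in> V - {u, v}" | "q \<in> {u, v}" "p \<in> V - {u, v}"
    using pq assms(3) by (auto simp: insert_commute)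
  then show ?thesis
    using that pq by cases (auto simp: cmap_def insert_commute)
qed

text \<open>Two edges with the same image share a neighbour b of both u and v, which is excluded
  because u, v, b would form a triangle.\<close>

lemma inj_on_contr_edges:
  assumes tree: "is_tree V E" and uv: "{u, v} \<in> E" and w: "w \<notin> V - {u, v}"
  shows "inj_on (\<lambda>e. cmap u v w ` e) (E - {{u, v}})"
proof -
  have non_incident: "cmap u v w ` e = e" "w \<notin> e" if "e \<in> E" "u \<notin> e" "v \<notin> e" for e
  proof -
    have "e \<subseteq> V" using tree that(1) unfolding is_tree_def by blast
    then show "w \<notin> e" using that(2,3) w by blast
    show "cmap u v w ` e = e" using that(2,3) unfolding cmap_def by (auto simp: image_def)
  qed
  have incident: "e1 = e2" if e1: "e1 \<in> E - {{u, v}}" and e2: "e2 \<in> E - {{u, v}}"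
    and eq: "cmap u v w ` e1 = cmap u v w ` e2" and inc: "u \<in> e1 \<or> v \<in> e1" for e1 e2
  proof -
    obtain x b where xb: "e1 = {x, b}" "x \<in> {u, v}" "b \<in> V - {u, v}" "cmap u v w ` e1 = {w, b}"
      using contr_image_incident_edge[OF tree e1 inc] by blast
    have "w \<in> cmap u v w ` e2" using eq xb(4) by (metis insertI1)
    then have "u \<in> e2 \<or> v \<in> e2" using non_incident[of e2] e2 by auto
    then obtain x' b' where xb': "e2 = {x', b'}" "x' \<in> {u, v}" "b' \<in> V - {u, v}"
      "cmap u v w ` e2 = {w, b'}"
      using contr_image_incident_edge[OF tree e2] by blast
    have "b \<noteq> w" using xb(3) w by blast
    then have "b = b'" using eq xb(4) xb'(4) by (auto simp: doubleton_eq_iff)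
    moreover have "x = x'"
    proof (rule ccontr)
      assume "x \<noteq> x'"
      then have "{x, x'} \<in> E" using uv xb(2) xb'(2) by (auto simp: insert_commute)
      moreover have "{x, b} \<in> E" "{x', b} \<in> E" using e1 e2 xb(1) xb'(1) \<open>b = b'\<close> by auto
      moreover have "x \<noteq> b" "x' \<noteq> b" using xb(2,3) xb'(2) by auto
      ultimately show False using is_tree_no_triangle[OF tree] \<open>x \<noteq> x'\<close> by blast
    qed
    ultimately show ?thesis using xb(1) xb'(1) by simp
  qed
  show ?thesis
  proof (rule inj_onI)
    fix e1 e2 assume e1: "e1 \<in> E - {{u, v}}" and e2: "e2 \<in> E - {{u, v}}"
      and eq: "cmap u v w ` e1 = cmap u v w ` e2"
    show "e1 = e2"
    proof (cases "u \<in> e1 \<or> v \<in> e1 \<or> u \<in> e2 \<or> v \<in> e2")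
      case True
      then show ?thesis
        using incident[OF e1 e2 eq] incident[OF e2 e1 eq[symmetric]] by argo
    next
      case False
      then have "cmap u v w ` e1 = e1" "cmap u v w ` e2 = e2" using non_incident(1) e1 e2 by auto
      with eq show ?thesis by argo
    qed
  qed
qed

lemma fit_cost_pullback:
  assumes "is_tree V E" "{u, v} \<in> E" "w \<notin> V - {u, v}"
  shows "fit_cost m E (g \<circ> cmap u v w) = fit_cost m (contr_E E u v w) g"
proof -
  have contracted_edge: "edge_cost m {u, v} (g \<circ> cmap u v w) = 0"
    unfolding edge_cost_def cmap_def by auto
  have "fit_cost m E (g \<circ> cmap u v w)
      = edge_cost m {u, v} (g \<circ> cmap u v w) + fit_cost m (E - {{u, v}}) (g \<circ> cmap u v w)"
    unfolding fit_cost_def using sum.remove[OF is_tree_finite_edges[OF assms(1)] assms(2)] .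
  also have "\<dots> = fit_cost m (E - {{u, v}}) (g \<circ> cmap u v w)"
    using contracted_edge by simp
  also have "\<dots> = fit_cost m (contr_E E u v w) g"
    unfolding fit_cost_def contr_E_def edge_cost_image
    by (simp add: sum.reindex[OF inj_on_contr_edges[OF assms]])
  finally show ?thesis .
qed

lemma md_eq_0_if_best_fit_agrees:
  assumes "best_fit m Sig V E n S loc f" "f u = f v"
  shows "md m Sig V E n S loc u v = 0"
proof -
  have "f u i \<in> VV m Sig V E n S loc u i \<inter> VV m Sig V E n S loc v i" for i
    using assms unfolding VV_def by (metis (mono_tags, lifting) IntI mem_Collect_eq)
  then show ?thesis unfolding md_def by auto
qed

theorem lemma6:
  fixes m n :: nat
    and Sig :: "nat \<Rightarrow> 'a set"
    and S :: "nat \<Rightarrow> nat \<Rightarrow> 'a"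
    and V :: "'v set" and E :: "'v set set" and loc :: "nat \<Rightarrow> 'v"
    and u v w :: 'v
  assumes "n \<ge> 2" and "m \<ge> 1"
    and "\<forall>i<m. finite (Sig i) \<and> Sig i \<noteq> {}"
    and "\<forall>j<n. \<forall>i<m. S j i \<in> Sig i"
    and "\<forall>j<n. \<forall>k<n. j \<noteq> k \<longrightarrow> (\<exists>i<m. S j i \<noteq> S k i)"
    and "is_tree_on n V E loc"
    and "{u, v} \<in> E"
    and "\<not> (u \<in> loc ` {..<n} \<and> v \<in> loc ` {..<n})"
    and "w \<notin> V - {u, v}"
    and "md m Sig V E n S loc u v > 0"
  shows "MP m Sig (contr_V V u v w) (contr_E E u v w) n S (contr_loc loc u v w)
           > MP m Sig V E n S loc"
proof (rule ccontr)
  assume not_increased: "\<not> ?thesis"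
  have tree: "is_tree V E" and labels: "inj_on loc {..<n}" "loc ` {..<n} \<subseteq> V"
    using assms(6) unfolding is_tree_on_def by auto
  have "\<forall>i<m. Sig i \<noteq> {}" using assms(3) by simp
  from is_fit_exists[OF this assms(4) inj_on_contr_loc[OF labels assms(8,9)]]
  obtain g where "is_fit m Sig (contr_V V u v w) n S (contr_loc loc u v w) g" ..
  then obtain g where g: "best_fit m Sig (contr_V V u v w) (contr_E E u v w) n S (contr_loc loc u v w) g"
    by (rule best_fit_exists)
  define f where "f = g \<circ> cmap u v w"
  have fit: "is_fit m Sig V n S loc f"
    using g unfolding best_fit_def f_def by (blast intro: is_fit_pullback)
  have "fit_cost m E f = MP m Sig (contr_V V u v w) (contr_E E u v w) n S (contr_loc loc u v w)"
    using g unfolding f_def fit_cost_pullback[OF tree assms(7,9)] best_fit_def by blast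
  then have "best_fit m Sig V E n S loc f"
    using fit MP_le_fit_cost[OF fit, of E] not_increased unfolding best_fit_def by linarith
  moreover have "f u = f v" unfolding f_def cmap_def by simp
  ultimately have "md m Sig V E n S loc u v = 0" by (rule md_eq_0_if_best_fit_agrees)
  with assms(10) show False by simp
qed

end
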